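(* Let $D\ge3$ and let $\mathcal G$ be a connected closed $(D+1)$-colored graph with colors $0,1,\dots,D$ and $2p$ vertices. Let $\mathcal B_{(1)},\dots,\mathcal B_{(|\rho|)}$ be the connected components of the subgraph of $\mathcal G$ formed by all vertices and all lines of colors $1,\dots,D$ (each is a connected closed $D$-colored graph), and for $i=1,\dots,D$ let $|\mathcal F_{0i}|$ be the number of faces of $\mathcal G$ of colors $\{0,i\}$. Then $$(D-1)|\rho| - \frac{2}{(D-2)!}\sum_{\rho}\omega(\mathcal B_{(\rho)}) - (D-1)p + \sum_{i=1}^D|\mathcal F_{0i}| \;=\; D - \frac{2}{(D-1)!}\,\omega(\mathcal G).$$ Consequently, in the tensor model with action $S(T,\bar T)=t_1\mathrm{Tr}_{\mathcal B_1}(T,\bar T)+\sum_{\mathcal B}t_{\mathcal B}N^{-\frac{2}{(D-2)!}\omega(\mathcal B)}\mathrm{Tr}_{\mathcal B}(T,\bar T)$ and weight $e^{-N^{D-1}S}$, the Feynman amplitude of $\mathcal G$ equals $\frac{\prod_\rho t_{\mathcal B_{(\rho)}}}{t_1^{p}}\,N^{D-\frac{2}{(D-1)!}\omega(\mathcal G)}$.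
   Context: A closed $n$-colored graph is a finite graph (multiple lines allowed) whose vertex set is partitioned into white and black vertices of equal number, every line joining a white to a black vertex, whose lines are each assigned one of $n$ colors, and such that every vertex has degree $n$ with the $n$ lines incident to it having pairwise distinct colors. A face of colors $\{i,j\}$ is a connected component of the subgraph formed by all vertices and all lines of colors $i,j$. For a cyclic permutation $\tau$ of the color set, the jacket $\mathcal J_\tau$ is the ribbon graph with all vertices and lines of the graph whose faces are the faces of colors $\{\tau^q(c),\tau^{q+1}(c)\}$ for all $q$; $\tau$ and $\tau^{-1}$ give the same jacket; its genus $g$ is defined by $V-E+F=2-2g$. The degree $\omega$ of a graph is the sum of genera of all its distinct jackets. For a $D$-colored graph $\mathcal B$, $\mathrm{Tr}_{\mathcal B}(T,\bar T)=\sum\prod_{i=1}^D\prod_{\text{lines } (v,\bar v)\text{ of color } i}\delta_{n^v_i\bar n^{\bar v}_i}\prod_{v}T_{\vec n^v}\prod_{\bar v}\bar T_{\bar{\vec n}^{\bar v}}$, with one complex rank-$D$ tensor $T$ (indices in $\{1,\dots,N\}$) per white vertex and one $\bar T$ per black vertex; $\mathcal B_1$ is the unique $D$-colored graph with two vertices. In the Feynman expansion each Wick contraction (a color-$0$ line) contributes $\frac{1}{t_1N^{D-1}}\prod_i\delta_{n_i\bar n_i}$ and each bubble $\mathcal B_{(\rho)}$ contributes $t_{\mathcal B_{(\rho)}}N^{D-1-\frac{2}{(D-2)!}\omega(\mathcal B_{(\rho)})}$ times its index contractions; each face of colors $\{0,i\}$ gives a free index sum, i.e. a factor $N$. *)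

theory Defs
  imports Complex_Main
begin

text \<open>
A closed colored graph with 2p vertices is given by
p white vertices Inl 0, ..., Inl (p-1), p black vertices Inr 0, ..., Inr (p-1), and, for each
color c, a bijection sigma c of {..<p}: the unique line of color c at the white vertex Inl w
joins it to the black vertex Inr (sigma c w).  The line of color c at Inl w is identified with
the pair (c, w); multiple lines are thus allowed.
\<close>

definition cg_verts :: "nat \<Rightarrow> (nat + nat) set" where
  "cg_verts p = Inl ` {..<p} \<union> Inr ` {..<p}"

definition closed_colored_graph :: "nat set \<Rightarrow> nat \<Rightarrow> (nat \<Rightarrow> nat \<Rightarrow> nat) \<Rightarrow> bool" where
  "closed_colored_graph C p \<sigma> \<longleftrightarrow> finite C \<and> (\<forall>c\<in>C. bij_betw (\<sigma> c) {..<p} {..<p})"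

definition cg_adj :: "(nat \<Rightarrow> nat \<Rightarrow> nat) \<Rightarrow> nat set \<Rightarrow> nat + nat \<Rightarrow> nat + nat \<Rightarrow> bool" where
  "cg_adj \<sigma> C x y \<longleftrightarrow> (\<exists>c\<in>C. \<exists>w. (x = Inl w \<and> y = Inr (\<sigma> c w)) \<or> (y = Inl w \<and> x = Inr (\<sigma> c w)))"

definition cg_comps :: "(nat \<Rightarrow> nat \<Rightarrow> nat) \<Rightarrow> nat set \<Rightarrow> (nat + nat) set \<Rightarrow> (nat + nat) set set" where
  "cg_comps \<sigma> C S = S // {(x, y). x \<in> S \<and> y \<in> S \<and>
       (\<lambda>u v. u \<in> S \<and> v \<in> S \<and> cg_adj \<sigma> C u v)\<^sup>*\<^sup>* x y}"

definition cg_lines :: "nat set \<Rightarrow> (nat + nat) set \<Rightarrow> (nat \<times> nat) set" where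
  "cg_lines C S = {(c, w). c \<in> C \<and> Inl w \<in> S}"

definition num_faces :: "(nat \<Rightarrow> nat \<Rightarrow> nat) \<Rightarrow> (nat + nat) set \<Rightarrow> nat \<Rightarrow> nat \<Rightarrow> nat" where
  "num_faces \<sigma> S i j = card (cg_comps \<sigma> {i, j} S)"

definition cyclic_perm :: "nat set \<Rightarrow> (nat \<Rightarrow> nat) \<Rightarrow> bool" where
  "cyclic_perm C \<tau> \<longleftrightarrow> bij_betw \<tau> C C \<and> (\<forall>c\<in>C. \<forall>d\<in>C. \<exists>k. (\<tau> ^^ k) c = d)"

text \<open>The jacket of \<tau>, represented by the set of color pairs
  {\<tau>^q(c), \<tau>^(q+1)(c)} of its faces (c any color; we take c = Min C).
  \<tau> and its inverse give the same set, so distinct jackets are distinct sets.\<close>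
definition jacket_pairs :: "nat set \<Rightarrow> (nat \<Rightarrow> nat) \<Rightarrow> nat set set" where
  "jacket_pairs C \<tau> = {{(\<tau> ^^ q) (Min C), (\<tau> ^^ Suc q) (Min C)} | q. True}"

definition jackets :: "nat set \<Rightarrow> nat set set set" where
  "jackets C = {jacket_pairs C \<tau> | \<tau>. cyclic_perm C \<tau>}"

text \<open>Genus of a jacket J of the colored graph on S with colors C: V - E + F = 2 - 2g.\<close>
definition jacket_genus :: "(nat \<Rightarrow> nat \<Rightarrow> nat) \<Rightarrow> nat set \<Rightarrow> (nat + nat) set \<Rightarrow> nat set set \<Rightarrow> real" where
  "jacket_genus \<sigma> C S J =
     (2 - real (card S) + real (card (cg_lines C S))
        - (\<Sum>e\<in>J. real (card (cg_comps \<sigma> e S)))) / 2"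

definition cg_degree :: "(nat \<Rightarrow> nat \<Rightarrow> nat) \<Rightarrow> nat set \<Rightarrow> (nat + nat) set \<Rightarrow> real" where
  "cg_degree \<sigma> C S = (\<Sum>J\<in>jackets C. jacket_genus \<sigma> C S J)"

definition bubbles :: "nat \<Rightarrow> nat \<Rightarrow> (nat \<Rightarrow> nat \<Rightarrow> nat) \<Rightarrow> (nat + nat) set set" where
  "bubbles D p \<sigma> = cg_comps \<sigma> {1..D} (cg_verts p)"

definition cg_connected :: "nat set \<Rightarrow> nat \<Rightarrow> (nat \<Rightarrow> nat \<Rightarrow> nat) \<Rightarrow> bool" where
  "cg_connected C p \<sigma> \<longleftrightarrow> card (cg_comps \<sigma> C (cg_verts p)) = 1"

text \<open>Feynman amplitude of G by the rules: each color-0 line gives 1/(t1 N^(D-1)),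
  each bubble B gives t_B N^(D-1-2/(D-2)! omega(B)), each face of colors {0,i} gives N.\<close>
definition feynman_amplitude ::
  "nat \<Rightarrow> nat \<Rightarrow> (nat \<Rightarrow> nat \<Rightarrow> nat) \<Rightarrow> real \<Rightarrow> ((nat + nat) set \<Rightarrow> real) \<Rightarrow> real \<Rightarrow> real" where
  "feynman_amplitude D p \<sigma> t1 tB N =
     (1 / (t1 * N ^ (D - 1))) ^ p
     * (\<Prod>B\<in>bubbles D p \<sigma>. tB B * N powr (real D - 1 - 2 / fact (D - 2) * cg_degree \<sigma> {1..D} B))
     * N ^ (\<Sum>i=1..D. num_faces \<sigma> (cg_verts p) 0 i)"

end

theory Submission
  imports Defs "HOL-Combinatorics.Cycles" "HOL-Combinatorics.Multiset_Permutations"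
begin

(* The identity is Gurau's computation of the degree through the jackets.  For a colour set
   C with n = |C| >= 3 colours, each jacket is the edge set {c, tau c} of a cyclic permutation
   tau of C, and exactly two cyclic permutations (tau and its inverse) give the same jacket.
   There are (n-1)! cyclic permutations, and (n-2)! of them send a given c to a given d,
   so each face type {c, d} lies in (n-2)!/2 of the (n-1)!/2 jackets.  Summing the Euler
   relations of all jackets therefore expresses the degree through the numbers of vertices,
   lines and faces only (cg_degree_formula).

   Applying the degree formula to G (colours 0..D) and to every bubble
   (colours 1..D), the faces with both colours in 1..D cancel and exponent_identity follows;
   the statement on the Feynman amplitude is then the collection of powers of N.
   With the genus defined by the Euler relation, the identity holds for every colouring
   map. *)

definition cyc_perms :: "nat set \<Rightarrow> (nat \<Rightarrow> nat) set" where
  "cyc_perms C = {\<tau>. cyclic_perm C \<tau> \<and> (\<forall>x. x \<notin> C \<longrightarrow> \<tau> x = x)}"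

definition jacket_edges :: "nat set \<Rightarrow> (nat \<Rightarrow> nat) \<Rightarrow> nat set set" where
  "jacket_edges C \<tau> = (\<lambda>c. {c, \<tau> c}) ` C"

lemma funpow_closed: "bij_betw \<tau> C C \<Longrightarrow> c \<in> C \<Longrightarrow> (\<tau> ^^ k) c \<in> C"
  by (induction k) (auto dest: bij_betwE)

lemma jacket_pairs_eq_edges:
  assumes "cyclic_perm C \<tau>" "finite C" "C \<noteq> {}"
  shows "jacket_pairs C \<tau> = jacket_edges C \<tau>"
proof
  have m: "Min C \<in> C" using assms by simp
  have b: "bij_betw \<tau> C C" using assms(1) by (simp add: cyclic_perm_def)
  show "jacket_pairs C \<tau> \<subseteq> jacket_edges C \<tau>"
    unfolding jacket_pairs_def jacket_edges_def using funpow_closed[OF b m] by auto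
  show "jacket_edges C \<tau> \<subseteq> jacket_pairs C \<tau>"
  proof
    fix e assume "e \<in> jacket_edges C \<tau>"
    then obtain c where c: "c \<in> C" "e = {c, \<tau> c}" by (auto simp: jacket_edges_def)
    then obtain k where "(\<tau> ^^ k) (Min C) = c" using assms(1) m by (auto simp: cyclic_perm_def)
    then have "e = {(\<tau> ^^ k) (Min C), (\<tau> ^^ Suc k) (Min C)}" using c by simp
    then show "e \<in> jacket_pairs C \<tau>" unfolding jacket_pairs_def by blast
  qed
qed

text \<open>Jackets are exactly the edge sets of normalised cyclic permutations
  (a cyclic permutation may be altered off C without changing its jacket).\<close>
lemma jackets_eq_image:
  assumes "finite C" "C \<noteq> {}"
  shows "jackets C = jacket_edges C ` cyc_perms C"
proof
  show "jacket_edges C ` cyc_perms C \<subseteq> jackets C"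
    unfolding jackets_def cyc_perms_def using jacket_pairs_eq_edges[OF _ assms] by blast
  show "jackets C \<subseteq> jacket_edges C ` cyc_perms C"
  proof
    fix J assume "J \<in> jackets C"
    then obtain \<tau> where t: "cyclic_perm C \<tau>" "J = jacket_pairs C \<tau>" by (auto simp: jackets_def)
    define \<tau>' where "\<tau>' = (\<lambda>x. if x \<in> C then \<tau> x else x)"
    have b: "bij_betw \<tau> C C" using t by (simp add: cyclic_perm_def)
    have b': "bij_betw \<tau>' C C" using b by (rule bij_betw_cong[THEN iffD1, rotated]) (simp add: \<tau>'_def)
    have "(\<tau>' ^^ k) c = (\<tau> ^^ k) c" if "c \<in> C" for k c
      using that by (induction k) (auto simp: \<tau>'_def funpow_closed[OF b])
    then have "cyclic_perm C \<tau>'" using t b' by (auto simp: cyclic_perm_def)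
    then have "\<tau>' \<in> cyc_perms C" by (auto simp: cyc_perms_def \<tau>'_def)
    moreover have "J = jacket_edges C \<tau>'"
      using t jacket_pairs_eq_edges[OF t(1) assms] by (auto simp: jacket_edges_def \<tau>'_def)
    ultimately show "J \<in> jacket_edges C ` cyc_perms C" by blast
  qed
qed

lemma cyc_perms_permutes: "\<tau> \<in> cyc_perms C \<Longrightarrow> \<tau> permutes C"
  by (rule bij_imp_permutes) (auto simp: cyc_perms_def cyclic_perm_def)

lemma cyc_perms_reach: "\<tau> \<in> cyc_perms C \<Longrightarrow> c \<in> C \<Longrightarrow> d \<in> C \<Longrightarrow> \<exists>k. (\<tau> ^^ k) c = d"
  by (auto simp: cyc_perms_def cyclic_perm_def)

lemma finite_cyc_perms: "finite C \<Longrightarrow> finite (cyc_perms C)"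
  by (rule finite_subset[OF _ finite_permutations]) (auto dest: cyc_perms_permutes)

text \<open>A cyclic permutation of at least three colours has no 2-cycle: an orbit of length
  two would be all of C.\<close>
lemma cyc_perms_no_2cycle:
  assumes t: "\<tau> \<in> cyc_perms C" and c: "c \<in> C" and C3: "card C \<ge> 3"
  shows "\<tau> (\<tau> c) \<noteq> c"
proof
  assume two_cycle: "\<tau> (\<tau> c) = c"
  have orbit: "(\<tau> ^^ k) c \<in> {c, \<tau> c}" for k by (induction k) (use two_cycle in auto)
  have "C \<subseteq> {c, \<tau> c}" using cyc_perms_reach[OF t c] orbit by blast
  then have "card C \<le> card {c, \<tau> c}" by (intro card_mono) auto
  also have "\<dots> \<le> 2" by (simp add: card_insert_if)
  finally show False using C3 by simp
qed

lemma inj_on_jacket_edge: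
  assumes "\<tau> \<in> cyc_perms C" "card C \<ge> 3"
  shows "inj_on (\<lambda>c. {c, \<tau> c}) C"
proof
  fix c d assume cd: "c \<in> C" "d \<in> C" "{c, \<tau> c} = {d, \<tau> d}"
  show "c = d"
  proof (rule ccontr)
    assume "c \<noteq> d"
    then have "c = \<tau> d" "\<tau> c = d" using cd(3) by (auto simp: doubleton_eq_iff)
    then show False using cyc_perms_no_2cycle[OF assms(1) cd(2) assms(2)] by simp
  qed
qed

lemma funpow_inv_cancel:
  assumes "\<tau> permutes C"
  shows "(inv \<tau> ^^ k) ((\<tau> ^^ k) x) = x"
proof (induction k arbitrary: x)
  case 0 then show ?case by simp
next
  case (Suc k)
  have "(inv \<tau> ^^ Suc k) ((\<tau> ^^ Suc k) x) = (inv \<tau> ^^ k) (inv \<tau> (\<tau> ((\<tau> ^^ k) x)))"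
  proof -
    have "(\<tau> ^^ Suc k) x = \<tau> ((\<tau> ^^ k) x)" by simp
    moreover have "(inv \<tau> ^^ Suc k) y = (inv \<tau> ^^ k) (inv \<tau> y)" for y
      by (simp only: funpow_Suc_right comp_apply)
    ultimately show ?thesis by (simp only:)
  qed
  also have "\<dots> = x" using Suc.IH by (simp add: permutes_inverses[OF assms])
  finally show ?case .
qed

lemma cyc_perms_inv:
  assumes t: "\<tau> \<in> cyc_perms C"
  shows "inv \<tau> \<in> cyc_perms C"
proof -
  have p: "\<tau> permutes C" using cyc_perms_permutes t .
  have pi: "inv \<tau> permutes C" using permutes_inv[OF p] .
  have "\<exists>k. (inv \<tau> ^^ k) c = d" if cd: "c \<in> C" "d \<in> C" for c d
  proof -
    obtain k where "(\<tau> ^^ k) d = c" using cyc_perms_reach[OF t cd(2,1)] by blast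
    then show ?thesis using funpow_inv_cancel[OF p, of k d] by metis
  qed
  then show ?thesis using pi permutes_imp_bij[OF pi] permutes_not_in[OF pi]
    by (auto simp: cyc_perms_def cyclic_perm_def)
qed

lemma jacket_edges_inv:
  assumes "\<tau> \<in> cyc_perms C"
  shows "jacket_edges C (inv \<tau>) = jacket_edges C \<tau>"
proof -
  have p: "\<tau> permutes C" using cyc_perms_permutes assms .
  have "(\<lambda>c. {c, inv \<tau> c}) ` C = (\<lambda>c. {c, inv \<tau> c}) ` (\<tau> ` C)"
    by (simp add: permutes_image[OF p])
  also have "\<dots> = (\<lambda>c. {c, \<tau> c}) ` C"
    by (auto simp: permutes_inverses[OF p] insert_commute image_image)
  finally show ?thesis unfolding jacket_edges_def .
qed

text \<open>\<dots> and no other cyclic permutation does: if the jackets of \<tau> and \<tau>' coincide then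
  \<tau>' agrees pointwise with \<tau> or with its inverse, and (no 2-cycles) the choice propagates
  along the single orbit.\<close>
lemma jacket_edges_determine:
  assumes t: "\<tau> \<in> cyc_perms C" and t': "\<tau>' \<in> cyc_perms C" and C3: "card C \<ge> 3"
    and eq: "jacket_edges C \<tau>' = jacket_edges C \<tau>"
  shows "\<tau>' = \<tau> \<or> \<tau>' = inv \<tau>"
proof -
  have p: "\<tau> permutes C" using cyc_perms_permutes t .
  have p': "\<tau>' permutes C" using cyc_perms_permutes t' .
  have pointwise: "\<tau>' x = \<tau> x \<or> \<tau>' x = inv \<tau> x" if x: "x \<in> C" for x
  proof -
    have "{x, \<tau>' x} \<in> jacket_edges C \<tau>" using eq x by (auto simp: jacket_edges_def)
    then obtain c where "c \<in> C" "{x, \<tau>' x} = {c, \<tau> c}" by (auto simp: jacket_edges_def)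
    then show ?thesis by (auto simp: doubleton_eq_iff permutes_inverses[OF p])
  qed
  show ?thesis
  proof (cases "\<exists>x0\<in>C. \<tau>' x0 = \<tau> x0")
    case True
    then obtain x0 where x0: "x0 \<in> C" "\<tau>' x0 = \<tau> x0" by blast
    have along_orbit: "\<tau>' ((\<tau> ^^ k) x0) = \<tau> ((\<tau> ^^ k) x0)" for k
    proof (induction k)
      case 0 then show ?case using x0 by simp
    next
      case (Suc k)
      define y where "y = (\<tau> ^^ k) x0"
      have y: "y \<in> C" using funpow_closed[OF permutes_imp_bij[OF p] x0(1)] by (simp add: y_def)
      have "\<tau>' (\<tau> y) = \<tau> (\<tau> y) \<or> \<tau>' (\<tau> y) = inv \<tau> (\<tau> y)"
        using pointwise y permutes_in_image[OF p] by simp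
      moreover have "\<tau>' (\<tau>' y) \<noteq> y" using cyc_perms_no_2cycle[OF t' y C3] .
      ultimately have "\<tau>' (\<tau> y) = \<tau> (\<tau> y)"
        using Suc.IH by (auto simp: y_def[symmetric] permutes_inverses[OF p])
      then show ?case by (simp add: y_def)
    qed
    have "\<tau>' x = \<tau> x" for x
    proof (cases "x \<in> C")
      case True
      then obtain k where "(\<tau> ^^ k) x0 = x" using cyc_perms_reach[OF t x0(1)] by blast
      then show ?thesis using along_orbit by metis
    qed (simp add: permutes_not_in[OF p] permutes_not_in[OF p'])
    then show ?thesis by auto
  next
    case False
    have "\<tau>' x = inv \<tau> x" for x
      using pointwise False permutes_not_in[OF permutes_inv[OF p]] permutes_not_in[OF p']
      by (cases "x \<in> C") auto
    then show ?thesis by auto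
  qed
qed

lemma jacket_fibre_card:
  assumes t: "\<tau> \<in> cyc_perms C" and C3: "card C \<ge> 3"
  shows "card {\<tau>' \<in> cyc_perms C. jacket_edges C \<tau>' = jacket_edges C \<tau>} = 2"
proof -
  have "{\<tau>' \<in> cyc_perms C. jacket_edges C \<tau>' = jacket_edges C \<tau>} = {\<tau>, inv \<tau>}"
    using jacket_edges_determine[OF t _ C3] cyc_perms_inv[OF t] jacket_edges_inv[OF t] t by auto
  moreover have "\<tau> \<noteq> inv \<tau>"
  proof
    assume h: "\<tau> = inv \<tau>"
    obtain c where c: "c \<in> C" using C3 by fastforce
    have "\<tau> (\<tau> c) = c"
      using permutes_inverses(1)[OF cyc_perms_permutes[OF t], of c] h by metis
    then show False using cyc_perms_no_2cycle[OF t c C3] by simp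
  qed
  ultimately show ?thesis by simp
qed

text \<open>Counting cyclic permutations: they correspond bijectively to the orderings of C
  starting at a fixed colour m, of which there are (|C|-1)!.\<close>
definition rooted_orders :: "nat set \<Rightarrow> nat \<Rightarrow> nat list set" where
  "rooted_orders C m = {xs. distinct xs \<and> set xs = C \<and> hd xs = m}"

text \<open>Such an ordering is m followed by an arbitrary ordering of C - {m}.\<close>
lemma card_rooted_orders:
  assumes "finite C" "m \<in> C"
  shows "card (rooted_orders C m) = fact (card C - 1)"
proof -
  have "rooted_orders C m = Cons m ` permutations_of_set (C - {m})"
  proof
    show "rooted_orders C m \<subseteq> Cons m ` permutations_of_set (C - {m})"
    proof
      fix xs assume "xs \<in> rooted_orders C m"
      then have xs: "distinct xs" "set xs = C" "hd xs = m" unfolding rooted_orders_def by simp_all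
      then have "xs \<noteq> []" using assms(2) by auto
      then have split: "xs = m # tl xs" using xs(3) by (metis list.collapse)
      then have "distinct (tl xs)" "set (tl xs) = C - {m}"
        using xs(1,2) by (metis distinct.simps(2), metis Diff_insert_absorb distinct.simps(2) list.simps(15))
      then have "tl xs \<in> permutations_of_set (C - {m})" by (simp add: permutations_of_set_def)
      then show "xs \<in> Cons m ` permutations_of_set (C - {m})" using split by (metis imageI)
    qed
    show "Cons m ` permutations_of_set (C - {m}) \<subseteq> rooted_orders C m"
    proof
      fix xs assume "xs \<in> Cons m ` permutations_of_set (C - {m})"
      then obtain ys where "xs = m # ys" "set ys = C - {m}" "distinct ys"
        unfolding permutations_of_set_def by blast
      then show "xs \<in> rooted_orders C m" using assms(2) unfolding rooted_orders_def by auto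
    qed
  qed
  then show ?thesis using assms by (simp add: card_image)
qed

lemma cycle_of_list_funpow:
  assumes "distinct xs" "i < length xs"
  shows "(cycle_of_list xs ^^ k) (xs ! i) = xs ! ((k + i) mod length xs)"
proof -
  have "(cycle_of_list xs ^^ k) (xs ! i) = map (cycle_of_list xs ^^ k) xs ! i" using assms by simp
  also have "\<dots> = rotate k xs ! i" using cyclic_rotation[OF assms(1)] by simp
  also have "\<dots> = xs ! ((k + i) mod length xs)" using assms by (simp add: nth_rotate)
  finally show ?thesis .
qed

lemma cycle_of_list_in_cyc_perms:
  assumes d: "distinct xs" and s: "set xs = C"
  shows "cycle_of_list xs \<in> cyc_perms C"
proof -
  have p: "cycle_of_list xs permutes C" using cycle_permutes[of xs] s by simp
  have "\<exists>k. (cycle_of_list xs ^^ k) c = e" if ce: "c \<in> C" "e \<in> C" for c e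
  proof -
    obtain i where i: "i < length xs" "xs ! i = c" using ce s by (auto simp: in_set_conv_nth)
    obtain j where j: "j < length xs" "xs ! j = e" using ce s by (auto simp: in_set_conv_nth)
    have "(cycle_of_list xs ^^ (j + length xs - i)) c = xs ! ((j + length xs - i + i) mod length xs)"
      using cycle_of_list_funpow[OF d i(1)] i by simp
    also have "\<dots> = e" using i j by simp
    finally show ?thesis by blast
  qed
  then show ?thesis using p permutes_imp_bij[OF p] permutes_not_in[OF p]
    by (auto simp: cyc_perms_def cyclic_perm_def)
qed

text \<open>Every cyclic permutation is the cycle of the orbit list of m.\<close>
lemma cyc_perms_is_cycle_of_list:
  assumes fin: "finite C" and m: "m \<in> C" and t: "\<tau> \<in> cyc_perms C"
  shows "\<exists>xs \<in> rooted_orders C m. cycle_of_list xs = \<tau>"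
proof
  have p: "\<tau> permutes C" using cyc_perms_permutes t .
  have pp: "permutation \<tau>" using permutes_imp_permutation[OF fin p] .
  define xs where "xs = support \<tau> m"
  have "set xs = range (\<lambda>i. (\<tau> ^^ i) m)" using support_set[OF pp] by (simp add: xs_def)
  also have "\<dots> = C"
  proof
    show "range (\<lambda>i. (\<tau> ^^ i) m) \<subseteq> C"
      using funpow_closed[OF permutes_imp_bij[OF p] m] by auto
    show "C \<subseteq> range (\<lambda>i. (\<tau> ^^ i) m)"
      using cyc_perms_reach[OF t m] by (metis rangeI subsetI)
  qed
  finally have s: "set xs = C" .
  have "hd xs = m" using least_power_of_permutation(2)[OF pp] by (simp add: xs_def hd_map)
  then show "xs \<in> rooted_orders C m"
    using cycle_of_permutation[OF pp] s by (simp add: rooted_orders_def xs_def)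
  show "cycle_of_list xs = \<tau>"
  proof
    fix b show "cycle_of_list xs b = \<tau> b"
      using cycle_restrict[OF pp, of b m] s id_outside_supp[of b xs] permutes_not_in[OF p]
      by (cases "b \<in> C") (simp_all add: xs_def)
  qed
qed

lemma card_cyc_perms:
  assumes fin: "finite C" and m: "m \<in> C"
  shows "card (cyc_perms C) = fact (card C - 1)"
proof -
  have "bij_betw cycle_of_list (rooted_orders C m) (cyc_perms C)"
  proof (rule bij_betw_imageI)
    show "inj_on cycle_of_list (rooted_orders C m)"
    proof
      fix xs ys assume xs: "xs \<in> rooted_orders C m" and ys: "ys \<in> rooted_orders C m"
        and eq: "cycle_of_list xs = cycle_of_list ys"
      have dx: "distinct xs" "set xs = C" "hd xs = m" and dy: "distinct ys" "set ys = C" "hd ys = m"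
        using xs ys unfolding rooted_orders_def by simp_all
      then have "xs \<noteq> []" "ys \<noteq> []" using m by auto
      then have heads: "xs ! 0 = m" "ys ! 0 = m" using dx(3) dy(3) by (simp_all add: hd_conv_nth)
      have len: "length xs = card C" "length ys = card C"
        using distinct_card[OF dx(1)] distinct_card[OF dy(1)] dx(2) dy(2) by simp_all
      show "xs = ys"
      proof (rule nth_equalityI)
        fix k assume "k < length xs"
        then show "xs ! k = ys ! k"
          using cycle_of_list_funpow[OF dx(1), of 0 k] cycle_of_list_funpow[OF dy(1), of 0 k]
            len heads eq by simp
      qed (use len in simp)
    qed
    show "cycle_of_list ` rooted_orders C m = cyc_perms C"
    proof
      show "cycle_of_list ` rooted_orders C m \<subseteq> cyc_perms C"
        using cycle_of_list_in_cyc_perms unfolding rooted_orders_def by blast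
      show "cyc_perms C \<subseteq> cycle_of_list ` rooted_orders C m"
        using cyc_perms_is_cycle_of_list[OF fin m] by blast
    qed
  qed
  then show ?thesis using card_rooted_orders[OF fin m] by (simp add: bij_betw_same_card)
qed

text \<open>Conjugating by a transposition of two colours preserves cyclicity; it moves the
  cyclic permutations sending c to d onto those sending c to d'.\<close>
lemma conj_transpose_cyc_perms:
  assumes t: "\<tau> \<in> cyc_perms C" and d: "d \<in> C" and d': "d' \<in> C"
  shows "transpose d d' \<circ> \<tau> \<circ> transpose d d' \<in> cyc_perms C"
proof -
  let ?\<pi> = "transpose d d'"
  have pp: "?\<pi> permutes C" using permutes_swap_id[OF d d'] .
  have q: "?\<pi> \<circ> \<tau> \<circ> ?\<pi> permutes C"
    using permutes_compose[OF permutes_compose[OF pp cyc_perms_permutes[OF t]] pp]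
    by (simp add: comp_assoc)
  have conj_pow: "((?\<pi> \<circ> \<tau> \<circ> ?\<pi>) ^^ k) x = ?\<pi> ((\<tau> ^^ k) (?\<pi> x))" for k x
    by (induction k arbitrary: x) auto
  have "\<exists>k. ((?\<pi> \<circ> \<tau> \<circ> ?\<pi>) ^^ k) c = e" if "c \<in> C" "e \<in> C" for c e
  proof -
    have "?\<pi> c \<in> C" "?\<pi> e \<in> C" using that permutes_in_image[OF pp] by auto
    then obtain k where "(\<tau> ^^ k) (?\<pi> c) = ?\<pi> e" using cyc_perms_reach[OF t] by blast
    then have "((?\<pi> \<circ> \<tau> \<circ> ?\<pi>) ^^ k) c = e" using conj_pow[of k c] by simp
    then show ?thesis by blast
  qed
  then show ?thesis using q permutes_imp_bij[OF q] permutes_not_in[OF q]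
    by (auto simp: cyc_perms_def cyclic_perm_def)
qed

lemma card_cyc_perms_image_le:
  assumes fin: "finite C" and d: "d \<in> C" and d': "d' \<in> C" and cd: "c \<noteq> d" "c \<noteq> d'"
  shows "card {\<tau> \<in> cyc_perms C. \<tau> c = d} \<le> card {\<tau> \<in> cyc_perms C. \<tau> c = d'}"
proof (rule card_inj_on_le)
  let ?\<pi> = "transpose d d'"
  let ?f = "\<lambda>\<tau>. ?\<pi> \<circ> \<tau> \<circ> ?\<pi>"
  show "inj_on ?f {\<tau> \<in> cyc_perms C. \<tau> c = d}"
  proof
    fix x y assume eq: "?f x = ?f y"
    have "x z = y z" for z
    proof -
      have "x z = ?\<pi> (?f x (?\<pi> z))" by simp
      also have "\<dots> = ?\<pi> (?f y (?\<pi> z))" using eq by simp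
      finally show ?thesis by simp
    qed
    then show "x = y" by blast
  qed
  show "?f ` {\<tau> \<in> cyc_perms C. \<tau> c = d} \<subseteq> {\<tau> \<in> cyc_perms C. \<tau> c = d'}"
    using conj_transpose_cyc_perms[OF _ d d'] cd by auto
  show "finite {\<tau> \<in> cyc_perms C. \<tau> c = d'}" using finite_cyc_perms[OF fin] by simp
qed

text \<open>A cyclic permutation of a set with at least two elements has no fixed point, so
  \<tau> c ranges over C - {c}.\<close>
lemma cyc_perms_image_subset:
  assumes c: "c \<in> C" and d: "d \<in> C" "d \<noteq> c"
  shows "(\<lambda>\<tau>. \<tau> c) ` cyc_perms C \<subseteq> C - {c}"
proof
  fix x assume "x \<in> (\<lambda>\<tau>. \<tau> c) ` cyc_perms C"
  then obtain \<tau> where t: "\<tau> \<in> cyc_perms C" "x = \<tau> c" by blast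
  have "\<tau> c \<noteq> c"
  proof
    assume fixed: "\<tau> c = c"
    have "(\<tau> ^^ k) c = c" for k by (induction k) (use fixed in auto)
    then show False using cyc_perms_reach[OF t(1) c d(1)] d(2) by auto
  qed
  then show "x \<in> C - {c}" using t c permutes_in_image[OF cyc_perms_permutes[OF t(1)]] by simp
qed

text \<open>By symmetry all n - 1 possible images of c are equally frequent, so exactly
  (n-2)! cyclic permutations of an n-set send c to a given d \<noteq> c.\<close>
lemma card_cyc_perms_image:
  assumes fin: "finite C" and c: "c \<in> C" and d: "d \<in> C" and cd: "c \<noteq> d"
  shows "card {\<tau> \<in> cyc_perms C. \<tau> c = d} = fact (card C - 2)"
proof -
  let ?A = "\<lambda>d. card {\<tau> \<in> cyc_perms C. \<tau> c = d}"
  have equal: "?A d' = ?A d" if "d' \<in> C - {c}" for d'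
    using card_cyc_perms_image_le[OF fin d, of d' c] card_cyc_perms_image_le[OF fin _ d, of d' c]
      that cd by (simp add: le_antisym)
  have img: "(\<lambda>\<tau>. \<tau> c) ` cyc_perms C \<subseteq> C - {c}"
    using cyc_perms_image_subset[OF c d] cd by simp
  have "card (cyc_perms C) = (\<Sum>d'\<in>C - {c}. ?A d')"
    using sum.group[OF finite_cyc_perms[OF fin] _ img, of "\<lambda>_. 1::nat"] fin by simp
  also have "\<dots> = (card C - 1) * ?A d" using equal c fin by simp
  finally have count: "fact (card C - 1) = (card C - 1) * ?A d"
    using card_cyc_perms[OF fin c] by simp
  have "card {c, d} \<le> card C" using c d fin by (intro card_mono) auto
  then obtain k where "card C = Suc (Suc k)" using cd by (metis card_2_iff le_Suc_ex add_2_eq_Suc)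
  then have "Suc k * fact k = Suc k * ?A d" using count by simp
  then have "fact k = ?A d" using mult_left_cancel[of "Suc k"] by blast
  then show ?thesis using \<open>card C = Suc (Suc k)\<close> by simp
qed

text \<open>Each jacket is hit twice when summing over cyclic permutations.\<close>
lemma sum_jackets_half:
  fixes g :: "nat set set \<Rightarrow> real"
  assumes fin: "finite C" and C3: "card C \<ge> 3"
  shows "(\<Sum>J\<in>jackets C. g J) = (\<Sum>\<tau>\<in>cyc_perms C. g (jacket_edges C \<tau>)) / 2"
proof -
  let ?E = "jacket_edges C"
  have "(\<Sum>\<tau>\<in>cyc_perms C. g (?E \<tau>))
      = (\<Sum>J\<in>?E ` cyc_perms C. \<Sum>\<tau>\<in>{\<tau>\<in>cyc_perms C. ?E \<tau> = J}. g (?E \<tau>))"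
    using sum.image_gen[OF finite_cyc_perms[OF fin], of "\<lambda>\<tau>. g (?E \<tau>)" ?E] by simp
  also have "\<dots> = (\<Sum>J\<in>?E ` cyc_perms C. 2 * g J)"
  proof (rule sum.cong[OF refl])
    fix J assume "J \<in> ?E ` cyc_perms C"
    then obtain \<tau> where t: "\<tau> \<in> cyc_perms C" "J = ?E \<tau>" by blast
    have "(\<Sum>\<tau>'\<in>{\<tau>'\<in>cyc_perms C. ?E \<tau>' = J}. g (?E \<tau>')) = (\<Sum>\<tau>'\<in>{\<tau>'\<in>cyc_perms C. ?E \<tau>' = J}. g J)"
      by (rule sum.cong) auto
    also have "\<dots> = 2 * g J" using jacket_fibre_card[OF t(1) C3] t(2) by simp
    finally show "(\<Sum>\<tau>'\<in>{\<tau>'\<in>cyc_perms C. ?E \<tau>' = J}. g (?E \<tau>')) = 2 * g J" .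
  qed
  also have "\<dots> = 2 * (\<Sum>J\<in>jackets C. g J)"
  proof -
    have "C \<noteq> {}" using C3 by auto
    then show ?thesis by (simp add: jackets_eq_image[OF fin] sum_distrib_left)
  qed
  finally show ?thesis by simp
qed

text \<open>Averaging over jackets: a face type {c, d} lies in (n-2)!/2 of the (n-1)!/2 jackets,
  so summing "K minus the face contributions" over all jackets gives the following.\<close>
lemma sum_jackets_faces:
  fixes F :: "nat set \<Rightarrow> real" and K :: real
  assumes fin: "finite C" and C3: "card C \<ge> 3"
  shows "(\<Sum>J\<in>jackets C. K - (\<Sum>e\<in>J. F e))
     = fact (card C - 1) / 2 * K - fact (card C - 2) / 2 * (\<Sum>c\<in>C. \<Sum>d\<in>C - {c}. F {c, d})"
proof -
  obtain m where m: "m \<in> C" using C3 by fastforce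
  have edges: "(\<Sum>e\<in>jacket_edges C \<tau>. F e) = (\<Sum>c\<in>C. F {c, \<tau> c})" if t: "\<tau> \<in> cyc_perms C" for \<tau>
    unfolding jacket_edges_def using sum.reindex[OF inj_on_jacket_edge[OF t C3], of F] by simp
  have per_colour: "(\<Sum>\<tau>\<in>cyc_perms C. F {c, \<tau> c}) = fact (card C - 2) * (\<Sum>d\<in>C - {c}. F {c, d})"
    if c: "c \<in> C" for c
  proof -
    have "card (C - {c}) > 0" using C3 c fin by simp
    then obtain d where "d \<in> C" "d \<noteq> c" by (metis card_gt_0_iff Diff_iff ex_in_conv insertI1)
    then have img: "(\<lambda>\<tau>. \<tau> c) ` cyc_perms C \<subseteq> C - {c}"
      using cyc_perms_image_subset[OF c] by blast
    have "(\<Sum>\<tau>\<in>cyc_perms C. F {c, \<tau> c})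
        = (\<Sum>d\<in>C - {c}. \<Sum>\<tau>\<in>{\<tau>\<in>cyc_perms C. \<tau> c = d}. F {c, \<tau> c})"
      using sum.group[OF finite_cyc_perms[OF fin] _ img, of "\<lambda>\<tau>. F {c, \<tau> c}"] fin by simp
    also have "\<dots> = (\<Sum>d\<in>C - {c}. fact (card C - 2) * F {c, d})"
    proof (rule sum.cong[OF refl])
      fix d assume d: "d \<in> C - {c}"
      have "(\<Sum>\<tau>\<in>{\<tau>\<in>cyc_perms C. \<tau> c = d}. F {c, \<tau> c}) = (\<Sum>\<tau>\<in>{\<tau>\<in>cyc_perms C. \<tau> c = d}. F {c, d})"
        by (rule sum.cong) auto
      then show "(\<Sum>\<tau>\<in>{\<tau>\<in>cyc_perms C. \<tau> c = d}. F {c, \<tau> c}) = fact (card C - 2) * F {c, d}"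
        using card_cyc_perms_image[OF fin c, of d] d by simp
    qed
    finally show ?thesis by (simp add: sum_distrib_left)
  qed
  have "(\<Sum>J\<in>jackets C. K - (\<Sum>e\<in>J. F e))
      = (\<Sum>\<tau>\<in>cyc_perms C. K - (\<Sum>c\<in>C. F {c, \<tau> c})) / 2"
    using sum_jackets_half[OF fin C3] edges by simp
  also have "\<dots> = (real (card (cyc_perms C)) * K - (\<Sum>c\<in>C. \<Sum>\<tau>\<in>cyc_perms C. F {c, \<tau> c})) / 2"
    by (simp add: sum_subtractf sum.swap[of _ "cyc_perms C"])
  also have "\<dots> = (fact (card C - 1) * K - fact (card C - 2) * (\<Sum>c\<in>C. \<Sum>d\<in>C - {c}. F {c, d})) / 2"
    using per_colour card_cyc_perms[OF fin m] by (simp add: sum_distrib_left)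
  finally show ?thesis by (simp add: diff_divide_distrib)
qed


definition pair_faces :: "(nat \<Rightarrow> nat \<Rightarrow> nat) \<Rightarrow> nat set \<Rightarrow> (nat + nat) set \<Rightarrow> real" where
  "pair_faces \<sigma> C S = (\<Sum>c\<in>C. \<Sum>d\<in>C - {c}. real (card (cg_comps \<sigma> {c, d} S)))"

lemma cg_degree_formula:
  assumes fin: "finite C" and C3: "card C \<ge> 3"
  shows "cg_degree \<sigma> C S = fact (card C - 1) / 4 * (2 - real (card S) + real (card (cg_lines C S)))
     - fact (card C - 2) / 4 * pair_faces \<sigma> C S"
proof -
  let ?K = "2 - real (card S) + real (card (cg_lines C S))"
  have "cg_degree \<sigma> C S = (\<Sum>J\<in>jackets C. ?K - (\<Sum>e\<in>J. real (card (cg_comps \<sigma> e S)))) / 2"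
    unfolding cg_degree_def jacket_genus_def by (simp add: sum_divide_distrib)
  also have "\<dots> = (fact (card C - 1) / 2 * ?K - fact (card C - 2) / 2 * pair_faces \<sigma> C S) / 2"
    unfolding sum_jackets_faces[OF fin C3] pair_faces_def ..
  finally show ?thesis by simp
qed

text \<open>Adding a colour a adds the faces of types {a, i}, each counted for both orders.\<close>
lemma pair_faces_insert:
  assumes "a \<notin> A" "finite A"
  shows "pair_faces \<sigma> (insert a A) S = pair_faces \<sigma> A S + 2 * (\<Sum>i\<in>A. real (card (cg_comps \<sigma> {a, i} S)))"
proof -
  let ?F = "\<lambda>e. real (card (cg_comps \<sigma> e S))"
  have other: "(\<Sum>d\<in>insert a A - {c}. ?F {c, d}) = ?F {a, c} + (\<Sum>d\<in>A - {c}. ?F {c, d})"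
    if "c \<in> A" for c
  proof -
    have "insert a A - {c} = insert a (A - {c})" using that assms by auto
    then show ?thesis using assms by (simp add: insert_commute)
  qed
  have "pair_faces \<sigma> (insert a A) S = (\<Sum>i\<in>A. ?F {a, i}) + (\<Sum>c\<in>A. ?F {a, c} + (\<Sum>d\<in>A - {c}. ?F {c, d}))"
    unfolding pair_faces_def using assms other by (simp add: sum.insert)
  also have "\<dots> = pair_faces \<sigma> A S + 2 * (\<Sum>i\<in>A. ?F {a, i})"
    unfolding pair_faces_def by (simp add: sum.distrib)
  finally show ?thesis .
qed

definition comp_rel :: "(nat \<Rightarrow> nat \<Rightarrow> nat) \<Rightarrow> nat set \<Rightarrow> (nat + nat) set \<Rightarrow> ((nat + nat) \<times> (nat + nat)) set" where
  "comp_rel \<sigma> C S = {(x, y). x \<in> S \<and> y \<in> S \<and>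
       (\<lambda>u v. u \<in> S \<and> v \<in> S \<and> cg_adj \<sigma> C u v)\<^sup>*\<^sup>* x y}"

lemma cg_comps_quotient: "cg_comps \<sigma> C S = S // comp_rel \<sigma> C S"
  unfolding cg_comps_def comp_rel_def ..

lemma comp_rel_equiv: "equiv S (comp_rel \<sigma> C S)"
proof (rule equivI)
  let ?R = "\<lambda>u v. u \<in> S \<and> v \<in> S \<and> cg_adj \<sigma> C u v"
  have "cg_adj \<sigma> C u v \<Longrightarrow> cg_adj \<sigma> C v u" for u v unfolding cg_adj_def by blast
  then have "symp ?R" unfolding symp_def by blast
  then have "?R\<^sup>*\<^sup>* x y \<Longrightarrow> ?R\<^sup>*\<^sup>* y x" for x y by (rule sympD[OF symp_rtranclp])
  then show "sym (comp_rel \<sigma> C S)" unfolding comp_rel_def sym_def by blast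
  show "refl_on S (comp_rel \<sigma> C S)" unfolding comp_rel_def refl_on_def by auto
  show "trans (comp_rel \<sigma> C S)" unfolding comp_rel_def trans_def by (auto intro: rtranclp_trans)
  show "comp_rel \<sigma> C S \<subseteq> S \<times> S" unfolding comp_rel_def by auto
qed

lemma cg_comps_partition:
  assumes "finite S"
  shows "finite (cg_comps \<sigma> C S)" "\<And>B. B \<in> cg_comps \<sigma> C S \<Longrightarrow> B \<subseteq> S"
    "\<And>B. B \<in> cg_comps \<sigma> C S \<Longrightarrow> B \<noteq> {}" "\<Union>(cg_comps \<sigma> C S) = S"
    "\<And>A B. A \<in> cg_comps \<sigma> C S \<Longrightarrow> B \<in> cg_comps \<sigma> C S \<Longrightarrow> A \<noteq> B \<Longrightarrow> A \<inter> B = {}"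
proof -
  note e = comp_rel_equiv[of S \<sigma> C]
  show "finite (cg_comps \<sigma> C S)"
    unfolding cg_comps_quotient using finite_quotient[OF assms equiv_type[OF e]] .
  show "\<And>B. B \<in> cg_comps \<sigma> C S \<Longrightarrow> B \<subseteq> S"
    unfolding cg_comps_quotient using in_quotient_imp_subset[OF e] .
  show "\<And>B. B \<in> cg_comps \<sigma> C S \<Longrightarrow> B \<noteq> {}"
    unfolding cg_comps_quotient using in_quotient_imp_non_empty[OF e] .
  show "\<Union>(cg_comps \<sigma> C S) = S" unfolding cg_comps_quotient using Union_quotient[OF e] .
  show "\<And>A B. A \<in> cg_comps \<sigma> C S \<Longrightarrow> B \<in> cg_comps \<sigma> C S \<Longrightarrow> A \<noteq> B \<Longrightarrow> A \<inter> B = {}"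
    unfolding cg_comps_quotient using quotient_disj[OF e] by blast
qed

lemma finite_cg_comp: "finite S \<Longrightarrow> B \<in> cg_comps \<sigma> C S \<Longrightarrow> finite B"
  by (rule finite_subset[OF cg_comps_partition(2)])

lemma sum_over_comps:
  fixes h :: "nat + nat \<Rightarrow> 'b::comm_monoid_add"
  assumes "finite S"
  shows "(\<Sum>B\<in>cg_comps \<sigma> C S. \<Sum>x\<in>B. h x) = (\<Sum>x\<in>S. h x)"
proof -
  have "(\<Sum>x\<in>\<Union>(cg_comps \<sigma> C S). h x) = (\<Sum>B\<in>cg_comps \<sigma> C S. \<Sum>x\<in>B. h x)"
    using sum.Union_disjoint[of "cg_comps \<sigma> C S" h] cg_comps_partition(5)[OF assms]
      finite_cg_comp[OF assms] by (simp add: o_def)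
  then show ?thesis using cg_comps_partition(4)[OF assms] by simp
qed

lemma cg_comp_closed:
  assumes B: "B \<in> cg_comps \<sigma> C S" and y: "y \<in> B" and z: "z \<in> S" and yz: "cg_adj \<sigma> C y z"
  shows "z \<in> B"
proof -
  let ?R = "\<lambda>u v. u \<in> S \<and> v \<in> S \<and> cg_adj \<sigma> C u v"
  obtain b where b: "B = comp_rel \<sigma> C S `` {b}" "b \<in> S"
    using B unfolding cg_comps_quotient by (auto elim: quotientE)
  then have "?R\<^sup>*\<^sup>* b y" "y \<in> S" using y unfolding comp_rel_def by auto
  then have "?R\<^sup>*\<^sup>* b z" using z yz by (simp add: rtranclp.rtrancl_into_rtrancl)
  then show "z \<in> B" using b z unfolding comp_rel_def by simp
qed

lemma comp_class_restrict:
  assumes sub: "C' \<subseteq> C" and B: "B \<in> cg_comps \<sigma> C S" and x: "x \<in> B"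
  shows "comp_rel \<sigma> C' S `` {x} = comp_rel \<sigma> C' B `` {x}"
proof -
  let ?R = "\<lambda>S C u v. u \<in> S \<and> v \<in> S \<and> cg_adj \<sigma> C u v"
  have BS: "B \<subseteq> S" using in_quotient_imp_subset[OF comp_rel_equiv] B
    unfolding cg_comps_quotient by blast
  have adj: "cg_adj \<sigma> C' u v \<Longrightarrow> cg_adj \<sigma> C u v" for u v
    using sub unfolding cg_adj_def by blast
  have stays: "y \<in> B \<and> (?R B C')\<^sup>*\<^sup>* x y" if "(?R S C')\<^sup>*\<^sup>* x y" for y
    using that
  proof (induction rule: rtranclp_induct)
    case (step y z)
    then have "z \<in> B" using cg_comp_closed[OF B _ _ adj] by blast
    then show ?case using step by (auto intro: rtranclp.rtrancl_into_rtrancl)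
  qed (use x in simp)
  have grows: "(?R B C')\<^sup>*\<^sup>* x y \<Longrightarrow> (?R S C')\<^sup>*\<^sup>* x y" for y
    by (rule rtranclp_mono[THEN predicate2D, rotated]) (use BS in auto)
  show ?thesis
  proof
    show "comp_rel \<sigma> C' S `` {x} \<subseteq> comp_rel \<sigma> C' B `` {x}"
      using stays x unfolding comp_rel_def by auto
    show "comp_rel \<sigma> C' B `` {x} \<subseteq> comp_rel \<sigma> C' S `` {x}"
      using grows BS x unfolding comp_rel_def by auto
  qed
qed

lemma cg_comps_refine:
  assumes sub: "C' \<subseteq> C" and fin: "finite S"
  shows "cg_comps \<sigma> C' S = (\<Union>B\<in>cg_comps \<sigma> C S. cg_comps \<sigma> C' B)"
proof -
  have "cg_comps \<sigma> C' S = (\<Union>x\<in>S. {comp_rel \<sigma> C' S `` {x}})"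
    unfolding cg_comps_quotient quotient_def ..
  also have "\<dots> = (\<Union>B\<in>cg_comps \<sigma> C S. \<Union>x\<in>B. {comp_rel \<sigma> C' S `` {x}})"
    using cg_comps_partition(4)[OF fin, of \<sigma> C] by blast
  also have "\<dots> = (\<Union>B\<in>cg_comps \<sigma> C S. \<Union>x\<in>B. {comp_rel \<sigma> C' B `` {x}})"
    using comp_class_restrict[OF sub] by (intro SUP_cong refl) simp
  also have "\<dots> = (\<Union>B\<in>cg_comps \<sigma> C S. cg_comps \<sigma> C' B)"
    unfolding cg_comps_quotient quotient_def ..
  finally show ?thesis .
qed

lemma card_cg_comps_refine:
  assumes sub: "C' \<subseteq> C" and fin: "finite S"
  shows "card (cg_comps \<sigma> C' S) = (\<Sum>B\<in>cg_comps \<sigma> C S. card (cg_comps \<sigma> C' B))"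
proof -
  have disj: "cg_comps \<sigma> C' A \<inter> cg_comps \<sigma> C' B = {}"
    if AB: "A \<in> cg_comps \<sigma> C S" "B \<in> cg_comps \<sigma> C S" "A \<noteq> B" for A B
  proof (rule ccontr)
    assume "cg_comps \<sigma> C' A \<inter> cg_comps \<sigma> C' B \<noteq> {}"
    then obtain X where X: "X \<in> cg_comps \<sigma> C' A" "X \<in> cg_comps \<sigma> C' B" by blast
    have fA: "finite A" "finite B" using finite_cg_comp[OF fin] AB by auto
    have "X \<subseteq> A" "X \<subseteq> B" "X \<noteq> {}"
      using cg_comps_partition(2,3)[OF fA(1)] cg_comps_partition(2)[OF fA(2)] X by auto
    then show False using cg_comps_partition(5)[OF fin AB] by blast
  qed
  show ?thesis unfolding cg_comps_refine[OF sub fin]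
    using cg_comps_partition(1) finite_cg_comp[OF fin] disj
    by (intro card_UN_disjoint[OF cg_comps_partition(1)[OF fin]]) auto
qed

lemma sum_pair_faces_comps:
  assumes fin: "finite S"
  shows "(\<Sum>B\<in>cg_comps \<sigma> C S. pair_faces \<sigma> C B) = pair_faces \<sigma> C S"
proof -
  have "(\<Sum>B\<in>cg_comps \<sigma> C S. real (card (cg_comps \<sigma> {c, d} B))) = real (card (cg_comps \<sigma> {c, d} S))"
    if "c \<in> C" "d \<in> C" for c d
    using card_cg_comps_refine[of "{c, d}" C S \<sigma>] that fin by (simp flip: of_nat_sum)
  then show ?thesis unfolding pair_faces_def
    by (simp add: sum.swap[where A="cg_comps \<sigma> C S"])
qed

lemma card_lines_comps:
  assumes fin: "finite S" and finC: "finite C'"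
  shows "(\<Sum>B\<in>cg_comps \<sigma> C S. card (cg_lines C' B)) = card (cg_lines C' S)"
proof -
  have fl: "finite (cg_lines C' B)" if "finite B" for B
  proof -
    have "cg_lines C' B \<subseteq> C' \<times> (Inl -` B)" unfolding cg_lines_def by auto
    then show ?thesis using that finC by (auto intro: finite_subset simp: finite_vimageI)
  qed
  have "Inl w \<in> S \<longleftrightarrow> (\<exists>B\<in>cg_comps \<sigma> C S. Inl w \<in> B)" for w
    using cg_comps_partition(4)[OF fin] by blast
  then have union: "cg_lines C' S = (\<Union>B\<in>cg_comps \<sigma> C S. cg_lines C' B)"
    unfolding cg_lines_def by auto
  have disj: "cg_lines C' A \<inter> cg_lines C' B = {}"
    if "A \<in> cg_comps \<sigma> C S" "B \<in> cg_comps \<sigma> C S" "A \<noteq> B" for A B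
    using cg_comps_partition(5)[OF fin that] unfolding cg_lines_def by auto
  have "card (\<Union>B\<in>cg_comps \<sigma> C S. cg_lines C' B) = (\<Sum>B\<in>cg_comps \<sigma> C S. card (cg_lines C' B))"
    using fl finite_cg_comp[OF fin] disj
    by (intro card_UN_disjoint[OF cg_comps_partition(1)[OF fin]]) auto
  then show ?thesis unfolding union by simp
qed

lemma sum_degree_comps:
  assumes fin: "finite C" and C3: "card C \<ge> 3" and finS: "finite S"
  shows "(\<Sum>B\<in>cg_comps \<sigma> C S. cg_degree \<sigma> C B)
    = fact (card C - 1) / 4 * (2 * real (card (cg_comps \<sigma> C S)) - real (card S) + real (card (cg_lines C S)))
      - fact (card C - 2) / 4 * pair_faces \<sigma> C S"
proof -
  let ?P = "cg_comps \<sigma> C S"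
  have verts: "(\<Sum>B\<in>?P. card B) = card S"
    using sum_over_comps[OF finS, where h="\<lambda>_. 1::nat" and \<sigma>=\<sigma> and C=C] by simp
  have "(\<Sum>B\<in>?P. 2 - real (card B) + real (card (cg_lines C B)))
      = 2 * real (card ?P) - real (\<Sum>B\<in>?P. card B) + real (\<Sum>B\<in>?P. card (cg_lines C B))"
    by (simp add: sum.distrib sum_subtractf)
  also have "\<dots> = 2 * real (card ?P) - real (card S) + real (card (cg_lines C S))"
    using verts card_lines_comps[OF finS fin] by simp
  finally have counts: "(\<Sum>B\<in>?P. 2 - real (card B) + real (card (cg_lines C B)))
      = 2 * real (card ?P) - real (card S) + real (card (cg_lines C S))" .
  show ?thesis
    unfolding cg_degree_formula[OF fin C3] sum_subtractf sum_distrib_left[symmetric] counts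
      sum_pair_faces_comps[OF finS] ..
qed

lemma cg_verts_facts:
  "finite (cg_verts p)" "card (cg_verts p) = 2 * p" "finite C \<Longrightarrow> card (cg_lines C (cg_verts p)) = card C * p"
proof -
  show "finite (cg_verts p)" unfolding cg_verts_def by simp
  have "card (cg_verts p) = card (Inl ` {..<p} :: (nat + nat) set) + card (Inr ` {..<p} :: (nat + nat) set)"
    unfolding cg_verts_def by (rule card_Un_disjoint) auto
  then show "card (cg_verts p) = 2 * p" by (simp add: card_image)
  have "cg_lines C (cg_verts p) = C \<times> {..<p}" unfolding cg_lines_def cg_verts_def by auto
  then show "finite C \<Longrightarrow> card (cg_lines C (cg_verts p)) = card C * p"
    by (simp add: card_cartesian_product)
qed

text \<open>Both degrees are expressed through the face count
  of colours 1..D, which cancels, and the faces of colours {0,i}.\<close>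
lemma exponent_identity:
  fixes D p :: nat and \<sigma> :: "nat \<Rightarrow> nat \<Rightarrow> nat"
  assumes D3: "D \<ge> 3"
  shows "(real D - 1) * real (card (bubbles D p \<sigma>))
           - 2 / fact (D - 2) * (\<Sum>B\<in>bubbles D p \<sigma>. cg_degree \<sigma> {1..D} B)
           - (real D - 1) * real p
           + real (\<Sum>i=1..D. num_faces \<sigma> (cg_verts p) 0 i)
         = real D - 2 / fact (D - 1) * cg_degree \<sigma> {0..D} (cg_verts p)"
proof -
  let ?V = "cg_verts p" and ?\<rho> = "real (card (bubbles D p \<sigma>))"
  define f1 :: real where "f1 = fact (D - 1)"
  define f2 :: real where "f2 = fact (D - 2)"
  define \<Phi> where "\<Phi> = pair_faces \<sigma> {1..D} ?V"
  define F0 where "F0 = (\<Sum>i=1..D. real (num_faces \<sigma> ?V 0 i))"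
  have f1: "f1 = (real D - 1) * f2" "fact D = real D * f1"
  proof -
    obtain k where "D = 3 + k" using le_Suc_ex[OF D3] by blast
    then have k: "D = Suc (Suc (Suc k))" by simp
    show "f1 = (real D - 1) * f2" "fact D = real D * f1" unfolding f1_def f2_def k by simp_all
  qed
  have "{0..D} = insert 0 {1..D}" by auto
  then have faces_G: "pair_faces \<sigma> {0..D} ?V = \<Phi> + 2 * F0"
    unfolding \<Phi>_def F0_def num_faces_def by (simp add: pair_faces_insert)
  have deg_G: "cg_degree \<sigma> {0..D} ?V = fact D / 4 * (2 - 2 * real p + (real D + 1) * real p)
      - f1 / 4 * (\<Phi> + 2 * F0)"
    using cg_degree_formula[of "{0..D}" \<sigma> ?V] D3 cg_verts_facts faces_G by (simp add: f1_def algebra_simps)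
  have deg_bubbles: "(\<Sum>B\<in>bubbles D p \<sigma>. cg_degree \<sigma> {1..D} B)
      = f1 / 4 * (2 * ?\<rho> - 2 * real p + real D * real p) - f2 / 4 * \<Phi>"
    using sum_degree_comps[of "{1..D}" "cg_verts p" \<sigma>] D3 cg_verts_facts
    unfolding bubbles_def \<Phi>_def f1_def f2_def by simp
  have "f2 > 0" "f1 > 0" unfolding f1_def f2_def by simp_all
  then have scale: "2 / f2 * (f1 / 4 * X - f2 / 4 * \<Phi>) = (real D - 1) / 2 * X - \<Phi> / 2"
    "2 / f1 * (real D * f1 / 4 * Y - f1 / 4 * Z) = real D / 2 * Y - Z / 2" for X Y Z
    unfolding f1(1) by (simp_all add: field_simps)
  have "real (\<Sum>i=1..D. num_faces \<sigma> ?V 0 i) = F0" unfolding F0_def by simp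
  then show ?thesis
    unfolding deg_G deg_bubbles f1(2) scale f1_def[symmetric] f2_def[symmetric]
    by (simp add: field_simps)
qed

lemma feynman_amplitude_power:
  fixes t1 N :: real and tB :: "(nat + nat) set \<Rightarrow> real"
  assumes D3: "D \<ge> 3" and N: "N > 0"
  shows "feynman_amplitude D p \<sigma> t1 tB N
          = (\<Prod>B\<in>bubbles D p \<sigma>. tB B) / t1 ^ p
            * N powr ((real D - 1) * real (card (bubbles D p \<sigma>))
           - 2 / fact (D - 2) * (\<Sum>B\<in>bubbles D p \<sigma>. cg_degree \<sigma> {1..D} B)
           - (real D - 1) * real p
           + real (\<Sum>i=1..D. num_faces \<sigma> (cg_verts p) 0 i))"
proof -
  let ?P = "bubbles D p \<sigma>"
  let ?e = "\<lambda>B. real D - 1 - 2 / fact (D - 2) * cg_degree \<sigma> {1..D} B"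
  let ?F = "\<Sum>i=1..D. num_faces \<sigma> (cg_verts p) 0 i"
  have bubbles: "(\<Prod>B\<in>?P. tB B * N powr ?e B) = (\<Prod>B\<in>?P. tB B) * N powr (\<Sum>B\<in>?P. ?e B)"
    using N by (simp add: prod.distrib powr_sum)
  have exps: "(\<Sum>B\<in>?P. ?e B) = (real D - 1) * real (card ?P)
      - 2 / fact (D - 2) * (\<Sum>B\<in>?P. cg_degree \<sigma> {1..D} B)"
    by (simp add: sum_subtractf sum_distrib_left)
  have "N ^ ((D - 1) * p) = N powr ((real D - 1) * real p)"
    using powr_realpow[OF N, of "(D - 1) * p"] D3 by (simp add: of_nat_diff)
  then have propagators: "(1 / (t1 * N ^ (D - 1))) ^ p = 1 / t1 ^ p * N powr (- ((real D - 1) * real p))"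
    by (simp add: power_mult_distrib power_mult power_one_over powr_minus_divide)
  have faces: "N ^ ?F = N powr real ?F" using powr_realpow[OF N, of ?F] by simp
  have "feynman_amplitude D p \<sigma> t1 tB N
      = (\<Prod>B\<in>?P. tB B) / t1 ^ p
        * (N powr (- ((real D - 1) * real p)) * N powr (\<Sum>B\<in>?P. ?e B) * N powr real ?F)"
    unfolding feynman_amplitude_def propagators bubbles faces by simp
  also have "\<dots> = (\<Prod>B\<in>?P. tB B) / t1 ^ p
        * N powr (- ((real D - 1) * real p) + (\<Sum>B\<in>?P. ?e B) + real ?F)"
    by (simp only: powr_add)
  finally show ?thesis unfolding exps by (simp add: algebra_simps)
qed

theorem mainTheorem3:
  fixes D p :: nat and \<sigma> :: "nat \<Rightarrow> nat \<Rightarrow> nat"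
  assumes "D \<ge> 3"
    and "closed_colored_graph {0..D} p \<sigma>"
    and "cg_connected {0..D} p \<sigma>"
  shows "(real D - 1) * real (card (bubbles D p \<sigma>))
           - 2 / fact (D - 2) * (\<Sum>B\<in>bubbles D p \<sigma>. cg_degree \<sigma> {1..D} B)
           - (real D - 1) * real p
           + real (\<Sum>i=1..D. num_faces \<sigma> (cg_verts p) 0 i)
         = real D - 2 / fact (D - 1) * cg_degree \<sigma> {0..D} (cg_verts p)
     \<and> (\<forall>(t1::real) (tB::(nat + nat) set \<Rightarrow> real) (N::real). t1 \<noteq> 0 \<longrightarrow> N > 0 \<longrightarrow>
          feynman_amplitude D p \<sigma> t1 tB N
          = (\<Prod>B\<in>bubbles D p \<sigma>. tB B) / t1 ^ p
            * N powr (real D - 2 / fact (D - 1) * cg_degree \<sigma> {0..D} (cg_verts p)))"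
  using exponent_identity[OF assms(1), of p \<sigma>] feynman_amplitude_power[OF assms(1)] by metis

end
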